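(* Suppose $\Pi$ is Klingen-ordinary at $p$ and we are in Case B, with $(t_1, t_2) = (0, r_1 - r_2)$. If one of the pairwise products $\{ \alpha \mathfrak{a}_2, \dots, \delta \mathfrak{b}_2\}$ is equal to $p^{r_1 + 2}$, then $\Pi$ must in fact be Borel-ordinary at $p$, $\Sigma_2$ is ordinary at $p$, and the ``bad'' eigenvalue is either $\beta \mathfrak{b}_2$ or $\gamma \mathfrak{a}_2$ (or possibly both) where $\alpha$ and $\mathfrak{a}_2$ are the unit eigenvalues.
   Context: $\Pi$ is a non-endoscopic, non-CAP cuspidal automorphic representation of $\mathrm{GSp}_4$, discrete series at $\infty$ of weight $(r_1+3, r_2+3)$ with $r_1 \ge r_2 \ge 0$, unramified at $p$. Its Hecke parameters $\alpha,\beta,\gamma,\delta$ at $p$ (of $\Pi_p' = \Pi_p \otimes \|\cdot\|^{-(r_1+r_2)/2}$) all have complex absolute value $p^{(r_1+r_2+3)/2}$, satisfy $\alpha\delta = \beta\gamma = p^{r_1+r_2+3}\chi_\Pi(p)$ (with $\chi_\Pi(p)$ a root of unity), and are ordered so that $v_p(\alpha) \le v_p(\beta) \le v_p(\gamma) \le v_p(\delta)$; then $v_p(\alpha)\ge 0$, $v_p(\alpha\beta)\ge r_2+1$. $\Pi$ is Siegel-ordinary if $v_p(\alpha)=0$, Klingen-ordinary if $v_p(\alpha\beta)=r_2+1$, Borel-ordinary if both. Case B: additionally $\Sigma_2$ is a cuspidal automorphic representation of $\mathrm{GL}_2$ generated by a holomorphic newform of weight $t_2+2$, unramified at $p$, with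 Hecke parameters $\mathfrak{a}_2,\mathfrak{b}_2$ (of $\Sigma_{2,p}' = \Sigma_{2,p}\otimes\|\cdot\|^{-t_2/2}$) of complex absolute value $p^{(t_2+1)/2}$ and $\mathfrak{a}_2\mathfrak{b}_2 = p^{t_2+1}\chi_{\Sigma_2}(p)$; one studies $\Pi\boxtimes\Sigma_2$ on $\mathrm{GSp}_4\times\mathrm{GL}_2$. Here $t_1 \ge 0$ is an integer such that $(r_1,r_2,t_1,t_2)$ satisfy $t_1+t_2\equiv r_1+r_2 \bmod 2$, $|t_1-t_2|\le r_1-r_2 \le t_1+t_2\le r_1+r_2$. The set $\{\alpha\mathfrak{a}_2,\dots,\delta\mathfrak{b}_2\}$ is the set of all eight products of a parameter of $\Pi$ with a parameter of $\Sigma_2$. *)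

theory Defs
  imports Complex_Main "HOL-Computational_Algebra.Primes"
begin

text \<open>A p-adic valuation on the complex numbers (equivalently: on the algebraic
numbers via a fixed embedding into C_p), normalised by v(p) = 1.
Valuations are only considered on nonzero elements.\<close>
definition padic_valuation :: "nat \<Rightarrow> (complex \<Rightarrow> real) \<Rightarrow> bool" where
  "padic_valuation p v \<longleftrightarrow>
     (\<forall>x y. x \<noteq> 0 \<longrightarrow> y \<noteq> 0 \<longrightarrow> v (x * y) = v x + v y) \<and>
     (\<forall>x y. x \<noteq> 0 \<longrightarrow> y \<noteq> 0 \<longrightarrow> x + y \<noteq> 0 \<longrightarrow> v (x + y) \<ge> min (v x) (v y)) \<and>
     v (of_nat p) = 1"

definition root_of_unity :: "complex \<Rightarrow> bool" where
  "root_of_unity z \<longleftrightarrow> (\<exists>n::nat. n > 0 \<and> z ^ n = 1)"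

text \<open>Hecke parameters at p of a non-endoscopic non-CAP cuspidal representation Pi of GSp4
of weight (r1+3, r2+3), unramified at p (only the properties used are recorded), ordered by
valuation; the facts v(alpha) >= 0 and v(alpha beta) >= r2+1 from the context are included.\<close>
definition GSp4_parameters ::
  "nat \<Rightarrow> (complex \<Rightarrow> real) \<Rightarrow> nat \<Rightarrow> nat \<Rightarrow> complex \<Rightarrow> complex \<Rightarrow> complex \<Rightarrow> complex \<Rightarrow> complex \<Rightarrow> bool" where
  "GSp4_parameters p v r1 r2 \<alpha> \<beta> \<gamma> \<delta> \<chi> \<longleftrightarrow>
     r1 \<ge> r2 \<and>
     (\<forall>x\<in>{\<alpha>, \<beta>, \<gamma>, \<delta>}. cmod x = real p powr ((real r1 + real r2 + 3) / 2)) \<and>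
     root_of_unity \<chi> \<and>
     \<alpha> * \<delta> = of_nat p ^ (r1 + r2 + 3) * \<chi> \<and>
     \<beta> * \<gamma> = of_nat p ^ (r1 + r2 + 3) * \<chi> \<and>
     v \<alpha> \<le> v \<beta> \<and> v \<beta> \<le> v \<gamma> \<and> v \<gamma> \<le> v \<delta> \<and>
     v \<alpha> \<ge> 0 \<and> v (\<alpha> * \<beta>) \<ge> real r2 + 1"

definition Siegel_ordinary :: "(complex \<Rightarrow> real) \<Rightarrow> complex \<Rightarrow> bool" where
  "Siegel_ordinary v \<alpha> \<longleftrightarrow> v \<alpha> = 0"

definition Klingen_ordinary :: "(complex \<Rightarrow> real) \<Rightarrow> nat \<Rightarrow> complex \<Rightarrow> complex \<Rightarrow> bool" where
  "Klingen_ordinary v r2 \<alpha> \<beta> \<longleftrightarrow> v (\<alpha> * \<beta>) = real r2 + 1"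

definition Borel_ordinary :: "(complex \<Rightarrow> real) \<Rightarrow> nat \<Rightarrow> complex \<Rightarrow> complex \<Rightarrow> bool" where
  "Borel_ordinary v r2 \<alpha> \<beta> \<longleftrightarrow> Siegel_ordinary v \<alpha> \<and> Klingen_ordinary v r2 \<alpha> \<beta>"

text \<open>Hecke parameters at p of a holomorphic newform of weight t2+2 unramified at p,
labelled so that v(a) <= v(b); integrality v(a) >= 0 is recorded.\<close>
definition GL2_parameters ::
  "nat \<Rightarrow> (complex \<Rightarrow> real) \<Rightarrow> nat \<Rightarrow> complex \<Rightarrow> complex \<Rightarrow> complex \<Rightarrow> bool" where
  "GL2_parameters p v t2 a b \<chi> \<longleftrightarrow>
     cmod a = real p powr ((real t2 + 1) / 2) \<and>
     cmod b = real p powr ((real t2 + 1) / 2) \<and>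
     root_of_unity \<chi> \<and>
     a * b = of_nat p ^ (t2 + 1) * \<chi> \<and>
     v a \<le> v b \<and> v a \<ge> 0"

definition GL2_ordinary :: "(complex \<Rightarrow> real) \<Rightarrow> complex \<Rightarrow> bool" where
  "GL2_ordinary v a \<longleftrightarrow> v a = 0"

end

theory Submission
  imports Defs
begin

text \<open>Let A \<le> B \<le> C \<le> D be the valuations of \<alpha>, \<beta>, \<gamma>, \<delta> and a \<le> b those of a2, b2.
The relations \<alpha>\<delta> = \<beta>\<gamma> = p^(r1+r2+3)\<chi> and a2 b2 = p^(t2+1)\<chi>' with roots of unity \<chi>, \<chi>'
give A + D = B + C = r1 + r2 + 3 and a + b = r1 - r2 + 1, and Klingen-ordinarity gives
A + B = r2 + 1. Hence B + b = r1 + 2 - (A + a) and C + a = r1 + 2 + (A + a), while the other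
six products have valuation strictly on one side of r1 + 2. A product equal to p^(r1+2) is
therefore \<beta> b2 or \<gamma> a2, and then A + a = 0 with A, a \<ge> 0 forces A = a = 0.\<close>

lemma padic_valuation_mult:
  "padic_valuation p v \<Longrightarrow> x \<noteq> 0 \<Longrightarrow> y \<noteq> 0 \<Longrightarrow> v (x * y) = v x + v y"
  by (simp add: padic_valuation_def)

lemma padic_valuation_one: "padic_valuation p v \<Longrightarrow> v 1 = 0"
  using padic_valuation_mult[of p v 1 1] by simp

lemma padic_valuation_power:
  "padic_valuation p v \<Longrightarrow> z \<noteq> 0 \<Longrightarrow> v (z ^ n) = real n * v z"
  by (induction n) (auto simp: padic_valuation_one padic_valuation_mult algebra_simps)

lemma padic_valuation_prime_power:
  "padic_valuation p v \<Longrightarrow> p > 0 \<Longrightarrow> v (of_nat p ^ n) = real n"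
  using padic_valuation_power[of p v "of_nat p" n] by (simp add: padic_valuation_def)

lemma root_of_unity_nonzero: "root_of_unity z \<Longrightarrow> z \<noteq> 0"
  unfolding root_of_unity_def by (metis power_0_left zero_neq_one gr_implies_not0)

lemma padic_valuation_root_of_unity:
  assumes "padic_valuation p v" and "root_of_unity z"
  shows "v z = 0"
proof -
  obtain n :: nat where "n > 0" and "z ^ n = 1"
    using assms(2) by (auto simp: root_of_unity_def)
  then have "real n * v z = 0"
    using padic_valuation_power[OF assms(1) root_of_unity_nonzero[OF assms(2)]]
      padic_valuation_one[OF assms(1)] by metis
  with \<open>n > 0\<close> show ?thesis by simp
qed

lemma padic_valuation_eq_prime_power_times_root_of_unity:
  assumes "padic_valuation p v" and "p > 0" and "root_of_unity \<chi>"
    and "x \<noteq> 0" and "y \<noteq> 0" and "x * y = of_nat p ^ n * \<chi>"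
  shows "v x + v y = real n"
proof -
  have "v x + v y = v (of_nat p ^ n * \<chi>)"
    using assms(1,4-6) by (metis padic_valuation_mult)
  also have "\<dots> = real n"
    using assms(1-3) root_of_unity_nonzero[OF assms(3)]
    by (simp add: padic_valuation_mult padic_valuation_prime_power padic_valuation_root_of_unity)
  finally show ?thesis .
qed

lemma nonzero_if_cmod_eq_powr: "cmod x = real p powr e \<Longrightarrow> p > 0 \<Longrightarrow> x \<noteq> 0"
  by auto

lemma GSp4_parameters_nonzero:
  "GSp4_parameters p v r1 r2 \<alpha> \<beta> \<gamma> \<delta> \<chi> \<Longrightarrow> p > 0 \<Longrightarrow>
     \<alpha> \<noteq> 0 \<and> \<beta> \<noteq> 0 \<and> \<gamma> \<noteq> 0 \<and> \<delta> \<noteq> 0"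
  unfolding GSp4_parameters_def by (blast dest: nonzero_if_cmod_eq_powr)

lemma GL2_parameters_nonzero:
  "GL2_parameters p v t a b \<chi> \<Longrightarrow> p > 0 \<Longrightarrow> a \<noteq> 0 \<and> b \<noteq> 0"
  unfolding GL2_parameters_def by (blast dest: nonzero_if_cmod_eq_powr)

lemma GSp4_parameters_valuation_sums:
  assumes "padic_valuation p v" and "p > 0" and "GSp4_parameters p v r1 r2 \<alpha> \<beta> \<gamma> \<delta> \<chi>"
  shows "v \<alpha> + v \<delta> = real r1 + real r2 + 3" and "v \<beta> + v \<gamma> = real r1 + real r2 + 3"
  using assms GSp4_parameters_nonzero[OF assms(3,2)]
    padic_valuation_eq_prime_power_times_root_of_unity[OF assms(1,2), of \<chi> _ _ "r1 + r2 + 3"]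
  by (simp_all add: GSp4_parameters_def)

lemma GL2_parameters_valuation_sum:
  assumes "padic_valuation p v" and "p > 0" and "GL2_parameters p v t a b \<chi>"
  shows "v a + v b = real t + 1"
  using assms GL2_parameters_nonzero[OF assms(3,2)]
    padic_valuation_eq_prime_power_times_root_of_unity[OF assms(1,2), of \<chi> a b "t + 1"]
  by (simp add: GL2_parameters_def)

lemma Klingen_ordinary_valuation_sum:
  "padic_valuation p v \<Longrightarrow> \<alpha> \<noteq> 0 \<Longrightarrow> \<beta> \<noteq> 0 \<Longrightarrow> Klingen_ordinary v r2 \<alpha> \<beta> \<Longrightarrow>
     v \<alpha> + v \<beta> = real r2 + 1"
  by (simp add: Klingen_ordinary_def padic_valuation_mult)

lemma Klingen_slope_products:
  fixes A B C D a b :: real and r1 r2 :: nat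
  assumes "A + D = real r1 + real r2 + 3" and "B + C = real r1 + real r2 + 3"
    and "A + B = real r2 + 1" and "a + b = real (r1 - r2) + 1" and "r2 \<le> r1"
    and "0 \<le> A" and "A \<le> B" and "0 \<le> a" and "a \<le> b"
  shows "A + a < real r1 + 2" and "A + b < real r1 + 2" and "B + a < real r1 + 2"
    and "B + b = real r1 + 2 - (A + a)" and "C + a = real r1 + 2 + (A + a)"
    and "C + b > real r1 + 2" and "D + a > real r1 + 2" and "D + b > real r1 + 2"
  using assms by (simp_all add: of_nat_diff)

theorem lemma3p8:
  fixes p r1 r2 t1 t2 :: nat
    and v :: "complex \<Rightarrow> real"
    and \<alpha> \<beta> \<gamma> \<delta> chiPi a2 b2 chiSigma x :: complex
  assumes "prime p"
    and "padic_valuation p v"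
    and "GSp4_parameters p v r1 r2 \<alpha> \<beta> \<gamma> \<delta> chiPi"
    and "GL2_parameters p v t2 a2 b2 chiSigma"
    and "Klingen_ordinary v r2 \<alpha> \<beta>"
    and "t1 = 0" and "t2 = r1 - r2"
    and "x \<in> {\<alpha> * a2, \<alpha> * b2, \<beta> * a2, \<beta> * b2,
              \<gamma> * a2, \<gamma> * b2, \<delta> * a2, \<delta> * b2}"
    and "x = of_nat p ^ (r1 + 2)"
  shows "Borel_ordinary v r2 \<alpha> \<beta> \<and> GL2_ordinary v a2 \<and>
         (x = \<beta> * b2 \<or> x = \<gamma> * a2)"
proof -
  have "p > 0" using assms(1) by (simp add: prime_gt_0_nat)
  note nonzero = GSp4_parameters_nonzero[OF assms(3) \<open>p > 0\<close>]
    GL2_parameters_nonzero[OF assms(4) \<open>p > 0\<close>]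
  have order: "r2 \<le> r1" "0 \<le> v \<alpha>" "v \<alpha> \<le> v \<beta>" "0 \<le> v a2" "v a2 \<le> v b2"
    using assms(3,4) by (simp_all add: GSp4_parameters_def GL2_parameters_def)
  have "v \<alpha> + v \<beta> = real r2 + 1"
    using Klingen_ordinary_valuation_sum[OF assms(2) _ _ assms(5)] nonzero by blast
  note slopes = Klingen_slope_products[OF
      GSp4_parameters_valuation_sums[OF assms(2) \<open>p > 0\<close> assms(3)] this
      GL2_parameters_valuation_sum[OF assms(2) \<open>p > 0\<close> assms(4), unfolded assms(7)] order]
  have "v x = real (r1 + 2)"
    unfolding assms(9) by (rule padic_valuation_prime_power[OF assms(2) \<open>p > 0\<close>])
  with assms(8) slopes nonzero have "x = \<beta> * b2 \<or> x = \<gamma> * a2" and "v \<alpha> + v a2 = 0"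
    by (auto simp: padic_valuation_mult[OF assms(2)])
  with order assms(5) show ?thesis
    by (simp add: Borel_ordinary_def Siegel_ordinary_def GL2_ordinary_def)
qed

end
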